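(* Let $(\mathbf A,\tau)$ be a state-morphism algebra. If $x,y\in\tau(A)$, then $\Theta(x,y)=\Theta_\tau(x,y)$. Consequently, $\Theta(\phi)=\Theta_\tau(\phi)$ whenever $\phi\subseteq\tau(A)^2$.
   Context: Let $F$ be an arbitrary algebraic type. A state-morphism on an algebra $\mathbf A$ of type $F$ is an endomorphism $\tau:\mathbf A\to\mathbf A$ with $\tau\circ\tau=\tau$; $(\mathbf A,\tau)$, viewed as an algebra of type $F$ extended by the unary operation $\tau$, is a state-morphism algebra. $\tau(A)=\{\tau(x):x\in A\}$. For $\phi\subseteq A^2$, $\Theta(\phi)$ is the congruence of $\mathbf A$ generated by $\phi$ and $\Theta_\tau(\phi)$ the congruence of $(\mathbf A,\tau)$ generated by $\phi$; $\Theta(x,y)=\Theta(\{(x,y)\})$, similarly $\Theta_\tau(x,y)$. *)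

theory Defs
  imports Main
begin

text \<open>An algebra of type F: carrier A, set of operation symbols Fs,
  arity function ar, and interpretation ops (an operation symbol f of arity
  ar f is applied to argument lists of length ar f).\<close>

definition is_algebra ::
  "'a set \<Rightarrow> 'f set \<Rightarrow> ('f \<Rightarrow> nat) \<Rightarrow> ('f \<Rightarrow> 'a list \<Rightarrow> 'a) \<Rightarrow> bool" where
  "is_algebra A Fs ar ops \<longleftrightarrow>
     (\<forall>f\<in>Fs. \<forall>xs. length xs = ar f \<and> set xs \<subseteq> A \<longrightarrow> ops f xs \<in> A)"

definition endomorphism ::
  "'a set \<Rightarrow> 'f set \<Rightarrow> ('f \<Rightarrow> nat) \<Rightarrow> ('f \<Rightarrow> 'a list \<Rightarrow> 'a) \<Rightarrow> ('a \<Rightarrow> 'a) \<Rightarrow> bool" where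
  "endomorphism A Fs ar ops \<tau> \<longleftrightarrow>
     \<tau> ` A \<subseteq> A \<and>
     (\<forall>f\<in>Fs. \<forall>xs. length xs = ar f \<and> set xs \<subseteq> A \<longrightarrow> \<tau> (ops f xs) = ops f (map \<tau> xs))"

definition state_morphism ::
  "'a set \<Rightarrow> 'f set \<Rightarrow> ('f \<Rightarrow> nat) \<Rightarrow> ('f \<Rightarrow> 'a list \<Rightarrow> 'a) \<Rightarrow> ('a \<Rightarrow> 'a) \<Rightarrow> bool" where
  "state_morphism A Fs ar ops \<tau> \<longleftrightarrow>
     endomorphism A Fs ar ops \<tau> \<and> (\<forall>x\<in>A. \<tau> (\<tau> x) = \<tau> x)"

definition compatible ::
  "'a set \<Rightarrow> 'f set \<Rightarrow> ('f \<Rightarrow> nat) \<Rightarrow> ('f \<Rightarrow> 'a list \<Rightarrow> 'a) \<Rightarrow> ('a \<times> 'a) set \<Rightarrow> bool" where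
  "compatible A Fs ar ops R \<longleftrightarrow>
     (\<forall>f\<in>Fs. \<forall>xs ys. length xs = ar f \<and> length ys = ar f \<and> set xs \<subseteq> A \<and> set ys \<subseteq> A
        \<and> list_all2 (\<lambda>a b. (a, b) \<in> R) xs ys \<longrightarrow> (ops f xs, ops f ys) \<in> R)"

definition congruence ::
  "'a set \<Rightarrow> 'f set \<Rightarrow> ('f \<Rightarrow> nat) \<Rightarrow> ('f \<Rightarrow> 'a list \<Rightarrow> 'a) \<Rightarrow> ('a \<times> 'a) set \<Rightarrow> bool" where
  "congruence A Fs ar ops R \<longleftrightarrow> equiv A R \<and> compatible A Fs ar ops R"

definition congruence_tau ::
  "'a set \<Rightarrow> 'f set \<Rightarrow> ('f \<Rightarrow> nat) \<Rightarrow> ('f \<Rightarrow> 'a list \<Rightarrow> 'a) \<Rightarrow> ('a \<Rightarrow> 'a) \<Rightarrow> ('a \<times> 'a) set \<Rightarrow> bool" where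
  "congruence_tau A Fs ar ops \<tau> R \<longleftrightarrow>
     congruence A Fs ar ops R \<and> (\<forall>(a, b)\<in>R. (\<tau> a, \<tau> b) \<in> R)"

definition Cg ::
  "'a set \<Rightarrow> 'f set \<Rightarrow> ('f \<Rightarrow> nat) \<Rightarrow> ('f \<Rightarrow> 'a list \<Rightarrow> 'a) \<Rightarrow> ('a \<times> 'a) set \<Rightarrow> ('a \<times> 'a) set" where
  "Cg A Fs ar ops \<phi> = \<Inter> {R. congruence A Fs ar ops R \<and> \<phi> \<subseteq> R}"

definition Cg_tau ::
  "'a set \<Rightarrow> 'f set \<Rightarrow> ('f \<Rightarrow> nat) \<Rightarrow> ('f \<Rightarrow> 'a list \<Rightarrow> 'a) \<Rightarrow> ('a \<Rightarrow> 'a) \<Rightarrow> ('a \<times> 'a) set \<Rightarrow> ('a \<times> 'a) set" where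
  "Cg_tau A Fs ar ops \<tau> \<phi> = \<Inter> {R. congruence_tau A Fs ar ops \<tau> R \<and> \<phi> \<subseteq> R}"

end

theory Submission
  imports Defs
begin

text \<open>Let \<open>C\<close> be the congruence generated by \<open>\<phi> \<subseteq> \<tau>(A)\<^sup>2\<close>. Pulling \<open>C\<close> back along the
  endomorphism \<open>\<tau>\<close> gives a congruence \<open>{(a, b). (\<tau> a, \<tau> b) \<in> C}\<close>; it contains \<open>\<phi>\<close> because
  \<open>\<tau>\<close> is the identity on \<open>\<tau>(A)\<close>, hence it contains \<open>C\<close>. So \<open>C\<close> is closed under \<open>\<tau>\<close>, i.e. it is
  already a congruence of \<open>(A, \<tau>)\<close>, and therefore equals \<open>\<Theta>\<^sub>\<tau>(\<phi>)\<close>.\<close>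

lemma congruence_carrier_square:
  assumes "is_algebra A Fs ar ops"
  shows "congruence A Fs ar ops (A \<times> A)"
  using assms
  unfolding congruence_def compatible_def is_algebra_def equiv_def refl_on_def sym_def trans_def
  by auto

lemma congruence_Inter:
  assumes "\<R> \<noteq> {}" and cong: "\<And>R. R \<in> \<R> \<Longrightarrow> congruence A Fs ar ops R"
  shows "congruence A Fs ar ops (\<Inter>\<R>)"
proof -
  have equivs: "\<And>R. R \<in> \<R> \<Longrightarrow> equiv A R"
    using cong unfolding congruence_def by blast
  have "equiv A (\<Inter>\<R>)"
    unfolding equiv_def refl_on_def sym_def trans_def
  proof (intro conjI allI impI ballI)
    show "\<Inter>\<R> \<subseteq> A \<times> A"
      using \<open>\<R> \<noteq> {}\<close> equivs by (blast dest: equiv_type)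
    show "(x, x) \<in> \<Inter>\<R>" if "x \<in> A" for x
      using that equivs by (auto simp: equiv_def refl_on_def)
    show "(y, x) \<in> \<Inter>\<R>" if "(x, y) \<in> \<Inter>\<R>" for x y
      using that equivs by (auto simp: equiv_def dest: symD)
    show "(x, z) \<in> \<Inter>\<R>" if "(x, y) \<in> \<Inter>\<R>" "(y, z) \<in> \<Inter>\<R>" for x y z
      using that equivs by (auto simp: equiv_def dest: transD)
  qed
  moreover have "compatible A Fs ar ops (\<Inter>\<R>)"
    unfolding compatible_def
  proof (intro ballI allI impI InterI)
    fix f xs ys R
    assume f: "f \<in> Fs" and R: "R \<in> \<R>"
      and args: "length xs = ar f \<and> length ys = ar f \<and> set xs \<subseteq> A \<and> set ys \<subseteq> A
        \<and> list_all2 (\<lambda>a b. (a, b) \<in> \<Inter>\<R>) xs ys"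
    then have "list_all2 (\<lambda>a b. (a, b) \<in> R) xs ys"
      by (auto elim: list_all2_mono)
    then show "(ops f xs, ops f ys) \<in> R"
      using cong[OF R] f args unfolding congruence_def compatible_def by blast
  qed
  ultimately show ?thesis unfolding congruence_def ..
qed

lemma congruence_Cg:
  assumes "is_algebra A Fs ar ops" and "\<phi> \<subseteq> A \<times> A"
  shows "congruence A Fs ar ops (Cg A Fs ar ops \<phi>)"
  unfolding Cg_def
proof (rule congruence_Inter)
  show "{R. congruence A Fs ar ops R \<and> \<phi> \<subseteq> R} \<noteq> {}"
    using congruence_carrier_square[OF assms(1)] assms(2) by blast
qed simp

lemma Cg_upper: "\<phi> \<subseteq> Cg A Fs ar ops \<phi>"
  unfolding Cg_def by blast

lemma Cg_least: "congruence A Fs ar ops R \<Longrightarrow> \<phi> \<subseteq> R \<Longrightarrow> Cg A Fs ar ops \<phi> \<subseteq> R"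
  unfolding Cg_def by blast

lemma state_morphism_image_subset:
  "state_morphism A Fs ar ops \<tau> \<Longrightarrow> \<tau> ` A \<subseteq> A"
  unfolding state_morphism_def endomorphism_def by blast

lemma congruence_preimage_endomorphism:
  assumes alg: "is_algebra A Fs ar ops"
    and endo: "endomorphism A Fs ar ops \<tau>"
    and C: "congruence A Fs ar ops C"
  shows "congruence A Fs ar ops {(a, b). a \<in> A \<and> b \<in> A \<and> (\<tau> a, \<tau> b) \<in> C}"
    (is "congruence _ _ _ _ ?R")
proof -
  have \<tau>A: "\<tau> ` A \<subseteq> A"
    and hom: "\<And>f xs. f \<in> Fs \<Longrightarrow> length xs = ar f \<Longrightarrow> set xs \<subseteq> A \<Longrightarrow>
                \<tau> (ops f xs) = ops f (map \<tau> xs)"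
    using endo unfolding endomorphism_def by auto
  have "equiv A ?R"
    using C \<tau>A unfolding congruence_def equiv_def refl_on_def sym_def trans_def by blast
  moreover have "compatible A Fs ar ops ?R"
    unfolding compatible_def
  proof (intro ballI allI impI)
    fix f xs ys
    assume f: "f \<in> Fs" and args: "length xs = ar f \<and> length ys = ar f \<and> set xs \<subseteq> A
        \<and> set ys \<subseteq> A \<and> list_all2 (\<lambda>a b. (a, b) \<in> ?R) xs ys"
    then have "list_all2 (\<lambda>a b. (a, b) \<in> C) (map \<tau> xs) (map \<tau> ys)"
      by (auto simp: list_all2_map1 list_all2_map2 elim: list_all2_mono)
    moreover have "set (map \<tau> xs) \<subseteq> A" "set (map \<tau> ys) \<subseteq> A"
      using args \<tau>A by auto
    ultimately have "(ops f (map \<tau> xs), ops f (map \<tau> ys)) \<in> C"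
      using C f args unfolding congruence_def compatible_def by simp
    moreover have "ops f xs \<in> A" "ops f ys \<in> A"
      using alg f args unfolding is_algebra_def by auto
    ultimately show "(ops f xs, ops f ys) \<in> ?R"
      using hom f args by simp
  qed
  ultimately show ?thesis unfolding congruence_def ..
qed

lemma Cg_closed_under_state_morphism:
  assumes alg: "is_algebra A Fs ar ops"
    and sm: "state_morphism A Fs ar ops \<tau>"
    and \<phi>: "\<phi> \<subseteq> \<tau> ` A \<times> \<tau> ` A"
    and ab: "(a, b) \<in> Cg A Fs ar ops \<phi>"
  shows "(\<tau> a, \<tau> b) \<in> Cg A Fs ar ops \<phi>"
proof -
  let ?C = "Cg A Fs ar ops \<phi>"
  have endo: "endomorphism A Fs ar ops \<tau>" and idem: "\<And>x. x \<in> A \<Longrightarrow> \<tau> (\<tau> x) = \<tau> x"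
    using sm unfolding state_morphism_def by auto
  have \<tau>A: "\<tau> ` A \<subseteq> A"
    by (rule state_morphism_image_subset[OF sm])
  have "\<phi> \<subseteq> A \<times> A"
    using \<phi> \<tau>A by blast
  then have C: "congruence A Fs ar ops ?C"
    by (rule congruence_Cg[OF alg])
  have "\<phi> \<subseteq> {(a, b). a \<in> A \<and> b \<in> A \<and> (\<tau> a, \<tau> b) \<in> ?C}"
  proof
    fix p assume p: "p \<in> \<phi>"
    then obtain a b where "p = (\<tau> a, \<tau> b)" "a \<in> A" "b \<in> A"
      using \<phi> by blast
    with p show "p \<in> {(a, b). a \<in> A \<and> b \<in> A \<and> (\<tau> a, \<tau> b) \<in> ?C}"
      using \<tau>A idem Cg_upper[of \<phi> A Fs ar ops] by auto
  qed
  then have "?C \<subseteq> {(a, b). a \<in> A \<and> b \<in> A \<and> (\<tau> a, \<tau> b) \<in> ?C}"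
    by (rule Cg_least[OF congruence_preimage_endomorphism[OF alg endo C]])
  with ab show ?thesis by blast
qed

lemma Cg_eq_Cg_tau_if_closed:
  assumes "congruence A Fs ar ops (Cg A Fs ar ops \<phi>)"
    and "\<And>a b. (a, b) \<in> Cg A Fs ar ops \<phi> \<Longrightarrow> (\<tau> a, \<tau> b) \<in> Cg A Fs ar ops \<phi>"
  shows "Cg A Fs ar ops \<phi> = Cg_tau A Fs ar ops \<tau> \<phi>"
proof
  show "Cg A Fs ar ops \<phi> \<subseteq> Cg_tau A Fs ar ops \<tau> \<phi>"
    unfolding Cg_tau_def Cg_def congruence_tau_def by blast
  have "congruence_tau A Fs ar ops \<tau> (Cg A Fs ar ops \<phi>)"
    using assms unfolding congruence_tau_def by blast
  then show "Cg_tau A Fs ar ops \<tau> \<phi> \<subseteq> Cg A Fs ar ops \<phi>"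
    using Cg_upper[of \<phi> A Fs ar ops] unfolding Cg_tau_def by blast
qed

lemma Cg_eq_Cg_tau:
  assumes alg: "is_algebra A Fs ar ops"
    and sm: "state_morphism A Fs ar ops \<tau>"
    and \<phi>: "\<phi> \<subseteq> \<tau> ` A \<times> \<tau> ` A"
  shows "Cg A Fs ar ops \<phi> = Cg_tau A Fs ar ops \<tau> \<phi>"
proof (rule Cg_eq_Cg_tau_if_closed)
  have "\<phi> \<subseteq> A \<times> A"
    using \<phi> state_morphism_image_subset[OF sm] by blast
  then show "congruence A Fs ar ops (Cg A Fs ar ops \<phi>)"
    by (rule congruence_Cg[OF alg])
qed (rule Cg_closed_under_state_morphism[OF alg sm \<phi>])

theorem lemma3p4:
  fixes A :: "'a set" and Fs :: "'f set" and ar :: "'f \<Rightarrow> nat"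
    and ops :: "'f \<Rightarrow> 'a list \<Rightarrow> 'a" and \<tau> :: "'a \<Rightarrow> 'a"
  assumes "is_algebra A Fs ar ops"
    and "state_morphism A Fs ar ops \<tau>"
  shows "(\<forall>x\<in>\<tau> ` A. \<forall>y\<in>\<tau> ` A.
            Cg A Fs ar ops {(x, y)} = Cg_tau A Fs ar ops \<tau> {(x, y)})
       \<and> (\<forall>\<phi>. \<phi> \<subseteq> \<tau> ` A \<times> \<tau> ` A \<longrightarrow> Cg A Fs ar ops \<phi> = Cg_tau A Fs ar ops \<tau> \<phi>)"
  using Cg_eq_Cg_tau[OF assms] by auto

end
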